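(* Let $\mathcal{F}\subseteq\mathcal{P}(\omega)$ be a free filter and let $\mathcal{F}^{(\omega)}$ be the set of all subsets of $\omega\times\omega$ of the form $\bigcup\{\{n\}\times A_n:n<\omega\}$ with $A_n\in\mathcal{F}$ for all $n$. Then (a) $\mathcal{F}$ is non-meager if and only if $\mathcal{F}^{(\omega)}$ is non-meager; and (b) $\mathcal{F}$ is a $P$-filter if and only if $\mathcal{F}^{(\omega)}$ is a $P$-filter.
   Context: A filter on a countable set $S$ is free if it contains all cofinite subsets of $S$. Subsets of $\omega$ (resp. $\omega\times\omega$) are identified with their characteristic functions, so $\mathcal{P}(\omega)$ and $\mathcal{P}(\omega\times\omega)$ carry the Cantor set topology; a filter is non-meager if it is not meager as a subspace of this Cantor set. A filter $\mathcal{G}$ is a $P$-filter if for every countable $\{G_n:n<\omega\}\subseteq\mathcal{G}$ there is $G\in\mathcal{G}$ with $G\setminus G_n$ finite for every $n$. ($\mathcal{F}^{(\omega)}$ is a filter on $\omega\times\omega$.) *)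

theory Defs
  imports "HOL-Analysis.Analysis"
begin

definition is_filter :: "'a set set \<Rightarrow> bool" where
  "is_filter F \<longleftrightarrow> UNIV \<in> F \<and> {} \<notin> F \<and>
     (\<forall>A B. A \<in> F \<and> A \<subseteq> B \<longrightarrow> B \<in> F) \<and>
     (\<forall>A B. A \<in> F \<and> B \<in> F \<longrightarrow> A \<inter> B \<in> F)"

definition free_filter :: "'a set set \<Rightarrow> bool" where
  "free_filter F \<longleftrightarrow> is_filter F \<and> (\<forall>A. finite (UNIV - A) \<longrightarrow> A \<in> F)"

definition P_filter :: "'a set set \<Rightarrow> bool" where
  "P_filter F \<longleftrightarrow> is_filter F \<and>
     (\<forall>G :: nat \<Rightarrow> 'a set. range G \<subseteq> F \<longrightarrow> (\<exists>H\<in>F. \<forall>n. finite (H - G n)))"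

definition cantor_top :: "('a \<Rightarrow> bool) topology" where
  "cantor_top = product_topology (\<lambda>_. discrete_topology UNIV) UNIV"

definition char_fun :: "'a set \<Rightarrow> ('a \<Rightarrow> bool)" where
  "char_fun A = (\<lambda>x. x \<in> A)"

definition nowhere_dense_in :: "'b topology \<Rightarrow> 'b set \<Rightarrow> bool" where
  "nowhere_dense_in X A \<longleftrightarrow> X interior_of (X closure_of A) = {}"

definition meager_in :: "'b topology \<Rightarrow> 'b set \<Rightarrow> bool" where
  "meager_in X A \<longleftrightarrow> (\<exists>N :: nat \<Rightarrow> 'b set. (\<forall>n. nowhere_dense_in X (N n)) \<and> A \<subseteq> (\<Union>n. N n))"

definition non_meager :: "'a set set \<Rightarrow> bool" where
  "non_meager F \<longleftrightarrow> \<not> meager_in cantor_top (char_fun ` F)"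

definition omega_power :: "nat set set \<Rightarrow> (nat \<times> nat) set set" where
  "omega_power F = {Sigma UNIV A | A. \<forall>n. A n \<in> F}"

end

theory Submission
  imports Defs
begin

text \<open>
  Part (b) and the easy half of (a) are routine: a pseudo-intersection in \<open>F\<^sup>(\<^sup>\<omega>\<^sup>)\<close> is
  assembled row by row from pseudo-intersections in \<open>F\<close> (row \<open>n\<close> only has to respect the
  first \<open>n + 1\<close> sets), row \<open>0\<close> of one in \<open>F\<^sup>(\<^sup>\<omega>\<^sup>)\<close> is one in \<open>F\<close>, and \<open>F\<^sup>(\<^sup>\<omega>\<^sup>)\<close> lies in the
  preimage of \<open>F\<close> under restriction to row \<open>0\<close>, which pulls nowhere dense sets back to
  nowhere dense sets.

  For the converse of (a), cover \<open>F\<^sup>(\<^sup>\<omega>\<^sup>)\<close> by an increasing sequence of nowhere dense sets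
  \<open>M\<^sub>k\<close> and choose pairwise disjoint finite blocks \<open>I\<^sub>k \<subseteq> \<omega> \<times> \<omega>\<close> with patterns \<open>u\<^sub>k\<close> such
  that no set following \<open>u\<^sub>k\<close> on \<open>I\<^sub>k\<close> lies in \<open>M\<^sub>k\<close>. Let \<open>K\<^sub>k\<close> collect the second coordinates
  of the points \<open>(n, m) \<in> I\<^sub>k\<close> with \<open>n \<le> m\<close>. If some \<open>A \<in> F\<close> missed infinitely many \<open>K\<^sub>k\<close>, the
  set \<open>{(n, m). m \<in> A, n \<le> m}\<close>, modified to follow \<open>u\<^sub>k\<close> on those blocks, would be an element
  of \<open>F\<^sup>(\<^sup>\<omega>\<^sup>)\<close> outside every \<open>M\<^sub>k\<close>. So every \<open>A \<in> F\<close> meets almost all \<open>K\<^sub>k\<close>, and as every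
  point lies in only finitely many \<open>K\<^sub>k\<close>, \<open>F\<close> is meager.
\<close>

section \<open>Nowhere dense sets in the Cantor space\<close>

definition cylinder :: "'a set \<Rightarrow> ('a \<Rightarrow> bool) \<Rightarrow> ('a \<Rightarrow> bool) set" where
  "cylinder E w = {f. \<forall>x\<in>E. f x = w x}"

lemma self_in_cylinder [simp]: "w \<in> cylinder E w"
  by (simp add: cylinder_def)

lemma cylinder_mono: "E \<subseteq> E' \<Longrightarrow> w' \<in> cylinder E w \<Longrightarrow> cylinder E' w' \<subseteq> cylinder E w"
  by (auto simp: cylinder_def)

lemma topspace_cantor_top [simp]: "topspace cantor_top = UNIV"
  by (simp add: cantor_top_def)

lemma openin_cylinder:
  assumes "finite E"
  shows "openin cantor_top (cylinder E w)"
proof -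
  have "cylinder E w = (\<Pi>\<^sub>E x\<in>UNIV. if x \<in> E then {w x} else UNIV)"
    by (auto simp: cylinder_def PiE_def extensional_def Pi_def)
  moreover have "finite {x. (if x \<in> E then {w x} else UNIV) \<noteq> topspace (discrete_topology UNIV)}"
    by (rule finite_subset[OF _ assms]) auto
  ultimately show ?thesis
    unfolding cantor_top_def by (auto intro: product_topology_basis)
qed

lemma openin_cantor_top_contains_cylinder:
  assumes "openin cantor_top T" "f \<in> T"
  obtains E where "finite E" "cylinder E f \<subseteq> T"
proof -
  obtain U where U: "f \<in> (\<Pi>\<^sub>E x\<in>UNIV. U x)"
    "finite {x. U x \<noteq> topspace (discrete_topology UNIV)}" "(\<Pi>\<^sub>E x\<in>UNIV. U x) \<subseteq> T"
    using product_topology_open_contains_basis[OF assms(1)[unfolded cantor_top_def] assms(2)]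
    by (elim exE conjE)
  then have "finite {x. U x \<noteq> UNIV}"
    by simp
  moreover have "cylinder {x. U x \<noteq> UNIV} f \<subseteq> (\<Pi>\<^sub>E x\<in>UNIV. U x)"
  proof
    fix g assume "g \<in> cylinder {x. U x \<noteq> UNIV} f"
    then have "g x \<in> U x" for x
      using U(1) by (cases "U x = UNIV") (auto simp: cylinder_def)
    then show "g \<in> (\<Pi>\<^sub>E x\<in>UNIV. U x)" by auto
  qed
  ultimately show ?thesis
    using that U(3) by (meson order_trans)
qed

lemma nowhere_dense_cantorE:
  fixes N :: "('a \<Rightarrow> bool) set"
  assumes "nowhere_dense_in cantor_top N" "finite E"
  obtains E' w' where "finite E'" "cylinder E' w' \<subseteq> cylinder E w" "cylinder E' w' \<inter> N = {}"
proof -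
  have "\<not> cylinder E w \<subseteq> cantor_top closure_of N"
  proof
    assume "cylinder E w \<subseteq> cantor_top closure_of N"
    then have "cylinder E w \<subseteq> cantor_top interior_of cantor_top closure_of N"
      using openin_cylinder[OF \<open>finite E\<close>] by (rule interior_of_maximal)
    then show False
      using assms(1) self_in_cylinder[of w E] unfolding nowhere_dense_in_def by auto
  qed
  then obtain f where f: "f \<in> cylinder E w" "f \<notin> cantor_top closure_of N"
    by (meson subsetI)
  then have "\<exists>T. openin cantor_top T \<and> f \<in> T \<and> T \<inter> N = {}"
    by (simp add: in_closure_of disjoint_iff) meson
  then obtain T where T: "openin cantor_top T" "f \<in> T" "T \<inter> N = {}"
    by (elim exE conjE)
  obtain E2 where "finite E2" "cylinder E2 f \<subseteq> T"
    using openin_cantor_top_contains_cylinder[OF T(1,2)] .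
  have "finite (E \<union> E2)"
    using \<open>finite E\<close> \<open>finite E2\<close> by simp
  moreover have "cylinder (E \<union> E2) f \<subseteq> cylinder E w"
    using f(1) by (simp add: cylinder_mono)
  moreover have "cylinder (E \<union> E2) f \<inter> N = {}"
    using \<open>cylinder E2 f \<subseteq> T\<close> T(3) cylinder_mono[of E2 "E \<union> E2" f f] by auto
  ultimately show thesis
    by (rule that)
qed

lemma nowhere_dense_cantorI:
  fixes N :: "('a \<Rightarrow> bool) set"
  assumes "\<And>E w. finite E \<Longrightarrow>
    \<exists>E' w'. finite E' \<and> cylinder E' w' \<subseteq> cylinder E w \<and> cylinder E' w' \<inter> N = {}"
  shows "nowhere_dense_in cantor_top N"
  unfolding nowhere_dense_in_def
proof (rule ccontr)
  assume "cantor_top interior_of cantor_top closure_of N \<noteq> {}"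
  then obtain f T where T: "openin cantor_top T" "f \<in> T" "T \<subseteq> cantor_top closure_of N"
    unfolding interior_of_def by blast
  obtain E where "finite E" "cylinder E f \<subseteq> T"
    using openin_cantor_top_contains_cylinder[OF T(1,2)] .
  moreover obtain E' w' where E': "finite E'" "cylinder E' w' \<subseteq> cylinder E f"
    "cylinder E' w' \<inter> N = {}"
    using assms[OF \<open>finite E\<close>, of f] by (elim exE conjE)
  ultimately have "w' \<in> cantor_top closure_of N"
    using T(3) self_in_cylinder[of w' E'] by (meson subsetD)
  then obtain y where "y \<in> N" "y \<in> cylinder E' w'"
    using openin_cylinder[OF E'(1), of w'] self_in_cylinder[of w' E']
    unfolding in_closure_of by meson
  with E'(3) show False
    by auto
qed

lemma nowhere_dense_cantor_Un:
  fixes A B :: "('a \<Rightarrow> bool) set"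
  assumes "nowhere_dense_in cantor_top A" "nowhere_dense_in cantor_top B"
  shows "nowhere_dense_in cantor_top (A \<union> B)"
proof (rule nowhere_dense_cantorI)
  fix E :: "'a set" and w
  assume "finite E"
  obtain E1 w1 where 1: "finite E1" "cylinder E1 w1 \<subseteq> cylinder E w" "cylinder E1 w1 \<inter> A = {}"
    by (rule nowhere_dense_cantorE[OF assms(1) \<open>finite E\<close>])
  obtain E2 w2 where 2: "finite E2" "cylinder E2 w2 \<subseteq> cylinder E1 w1" "cylinder E2 w2 \<inter> B = {}"
    by (rule nowhere_dense_cantorE[OF assms(2) \<open>finite E1\<close>])
  have "cylinder E2 w2 \<subseteq> cylinder E w" "cylinder E2 w2 \<inter> (A \<union> B) = {}"
    using 1(2,3) 2(2,3) by auto
  with 2(1) show "\<exists>E' w'. finite E' \<and> cylinder E' w' \<subseteq> cylinder E w \<and> cylinder E' w' \<inter> (A \<union> B) = {}"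
    by (intro exI[of _ E2] exI[of _ w2] conjI)
qed

lemma nowhere_dense_cantor_UN:
  fixes N :: "'i \<Rightarrow> ('a \<Rightarrow> bool) set"
  assumes "finite I" "\<And>i. i \<in> I \<Longrightarrow> nowhere_dense_in cantor_top (N i)"
  shows "nowhere_dense_in cantor_top (\<Union>i\<in>I. N i)"
  using assms
proof (induction I rule: finite_induct)
  case empty
  show ?case
  proof (rule nowhere_dense_cantorI)
    fix E :: "'a set" and w
    assume "finite E"
    then show "\<exists>E' w'. finite E' \<and> cylinder E' w' \<subseteq> cylinder E w \<and> cylinder E' w' \<inter> (\<Union>i\<in>{}. N i) = {}"
      by (intro exI[of _ E] exI[of _ w]) simp
  qed
next
  case (insert i I)
  have "nowhere_dense_in cantor_top (N i)" "nowhere_dense_in cantor_top (\<Union>i\<in>I. N i)"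
    using insert.prems insert.IH by auto
  then show ?case
    unfolding UN_insert by (rule nowhere_dense_cantor_Un)
qed

lemma nowhere_dense_cantor_avoid_patterns:
  fixes N :: "('a \<Rightarrow> bool) set" and Q :: "'a set set"
  assumes nd: "nowhere_dense_in cantor_top N" and "finite D" "finite Q"
  shows "\<exists>I u. finite I \<and> I \<inter> D = {} \<and>
    (\<forall>T\<in>Q. cylinder D (\<lambda>x. x \<in> T) \<inter> cylinder I u \<inter> N = {})"
  using \<open>finite Q\<close>
proof (induction Q rule: finite_induct)
  case empty
  show ?case
    by (intro exI[of _ "{}"] exI[of _ undefined]) simp
next
  case (insert T Q)
  then obtain I u where I: "finite I" "I \<inter> D = {}"
    "\<forall>T'\<in>Q. cylinder D (\<lambda>x. x \<in> T') \<inter> cylinder I u \<inter> N = {}"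
    by (elim exE conjE)
  define w where "w x = (if x \<in> D then x \<in> T else u x)" for x
  obtain E' w' where E': "finite E'" "cylinder E' w' \<subseteq> cylinder (D \<union> I) w" "cylinder E' w' \<inter> N = {}"
    using \<open>finite D\<close> I(1) by (metis finite_Un nowhere_dense_cantorE[OF nd])
  have w'_w: "w' x = w x" if "x \<in> D \<union> I" for x
    using E'(2) self_in_cylinder[of w' E'] that unfolding cylinder_def by blast
  define I' where "I' = (E' \<union> I) - D"
  have "cylinder D (\<lambda>x. x \<in> T') \<inter> cylinder I' w' \<inter> N = {}" if "T' \<in> insert T Q" for T'
  proof (cases "T' = T")
    case True
    have "cylinder D (\<lambda>x. x \<in> T) \<inter> cylinder I' w' \<subseteq> cylinder E' w'"
      using w'_w by (auto simp: cylinder_def I'_def w_def)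
    with E'(3) True show ?thesis
      by blast
  next
    case False
    have "cylinder I' w' \<subseteq> cylinder I u"
    proof
      fix f
      assume f: "f \<in> cylinder I' w'"
      have "f x = u x" if "x \<in> I" for x
      proof -
        have "x \<notin> D" "x \<in> I'"
          using I(2) that by (auto simp: I'_def)
        then show ?thesis
          using f w'_w[of x] that by (simp add: cylinder_def w_def)
      qed
      then show "f \<in> cylinder I u"
        by (simp add: cylinder_def)
    qed
    with I(3) False that show ?thesis
      by blast
  qed
  moreover have "finite I'" "I' \<inter> D = {}"
    using E'(1) I(1) by (auto simp: I'_def)
  ultimately show ?case
    by blast
qed

lemma nowhere_dense_cantor_avoid_finite:
  fixes N :: "('a \<Rightarrow> bool) set"
  assumes "nowhere_dense_in cantor_top N" "finite D"
  obtains I u where "finite I" "I \<inter> D = {}" "cylinder I u \<inter> N = {}"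
proof -
  obtain I u where I: "finite I" "I \<inter> D = {}"
    "\<forall>T\<in>Pow D. cylinder D (\<lambda>x. x \<in> T) \<inter> cylinder I u \<inter> N = {}"
    using nowhere_dense_cantor_avoid_patterns[OF assms finite_Pow_iff[THEN iffD2, OF assms(2)]]
    by (elim exE conjE)
  have "f \<notin> N" if "f \<in> cylinder I u" for f
  proof -
    have "f \<in> cylinder D (\<lambda>x. x \<in> {x \<in> D. f x})"
      by (simp add: cylinder_def)
    then show ?thesis
      using I(3) that by blast
  qed
  with I(1,2) that show thesis
    by blast
qed

lemma nowhere_dense_cantor_disjoint_cylinders:
  fixes M :: "nat \<Rightarrow> ('a \<Rightarrow> bool) set"
  assumes nd: "\<And>k. nowhere_dense_in cantor_top (M k)"
  obtains I u where "disjoint_family I" "\<forall>k. finite (I k) \<and> cylinder (I k) (u k) \<inter> M k = {}"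
proof -
  \<comment> \<open>The state \<open>(D, J, v)\<close> at stage \<open>k\<close> records the union \<open>D\<close> of the earlier blocks and the
    new block \<open>J\<close> with its pattern \<open>v\<close>.\<close>
  define P where "P k = (\<lambda>(D, J, v). finite D \<and> finite J \<and> J \<inter> D = {} \<and> cylinder J v \<inter> M k = {})"
    for k
  have avoid: "\<exists>J v. finite J \<and> J \<inter> D = {} \<and> cylinder J v \<inter> M k = {}" if "finite D" for D k
    using nowhere_dense_cantor_avoid_finite[OF nd that] by metis
  have "\<exists>s. \<forall>k. P k (s k) \<and> fst (s (Suc k)) = fst (s k) \<union> fst (snd (s k))"
  proof (rule dependent_nat_choice)
    show "\<exists>x. P 0 x"
      using avoid[of "{}" 0] by (auto simp: P_def)
  next
    fix x k
    assume "P k x"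
    obtain D J v where x: "x = (D, J, v)"
      by (cases x)
    with \<open>P k x\<close> have "finite (D \<union> J)"
      by (simp add: P_def)
    then obtain J' v' where "finite J'" "J' \<inter> (D \<union> J) = {}" "cylinder J' v' \<inter> M (Suc k) = {}"
      using avoid[where k = "Suc k"] by meson
    with \<open>finite (D \<union> J)\<close> x show "\<exists>y. P (Suc k) y \<and> fst y = fst x \<union> fst (snd x)"
      by (intro exI[of _ "(D \<union> J, J', v')"]) (simp add: P_def)
  qed
  then obtain s where s: "\<And>k. P k (s k)" "\<And>k. fst (s (Suc k)) = fst (s k) \<union> fst (snd (s k))"
    by blast
  define I where "I k = fst (snd (s k))" for k
  define u where "u k = snd (snd (s k))" for k
  have block: "finite (I k)" "I k \<inter> fst (s k) = {}" "cylinder (I k) (u k) \<inter> M k = {}" for k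
    using s(1)[of k] by (auto simp: P_def I_def u_def split: prod.splits)
  have earlier: "I j \<subseteq> fst (s k)" if "j < k" for j k
    using that
  proof (induction k)
    case (Suc k)
    then show ?case
      using s(2)[of k] by (auto simp: I_def less_Suc_eq)
  qed simp
  have "disjoint_family I"
    unfolding disjoint_family_on_def
    by (metis block(2) earlier disjoint_iff subsetD inf_commute linorder_neqE_nat)
  with block(1,3) show thesis
    by (intro that) auto
qed

lemma nowhere_dense_cantor_vimage_comp:
  fixes h :: "'b \<Rightarrow> 'a" and N :: "('b \<Rightarrow> bool) set"
  assumes "inj h" "nowhere_dense_in cantor_top N"
  shows "nowhere_dense_in cantor_top {g. g \<circ> h \<in> N}"
proof (rule nowhere_dense_cantorI)
  fix E :: "'a set" and w
  assume "finite E"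
  then have "finite (h -` E)"
    using assms(1) by (simp add: finite_vimageI)
  then obtain E0 w0 where E0: "finite E0" "cylinder E0 w0 \<subseteq> cylinder (h -` E) (w \<circ> h)"
    "cylinder E0 w0 \<inter> N = {}"
    by (rule nowhere_dense_cantorE[OF assms(2)])
  have w0_w: "w0 y = w (h y)" if "h y \<in> E" for y
    using E0(2) self_in_cylinder[of w0 E0] that unfolding cylinder_def by auto
  define w' where "w' x = (if x \<in> h ` E0 then w0 (inv h x) else w x)" for x
  have "cylinder (E \<union> h ` E0) w' \<subseteq> cylinder E w"
    using assms(1) w0_w by (auto simp: cylinder_def w'_def)
  moreover have "cylinder (E \<union> h ` E0) w' \<inter> {g. g \<circ> h \<in> N} = {}"
  proof -
    have "f \<circ> h \<in> cylinder E0 w0" if "f \<in> cylinder (E \<union> h ` E0) w'" for f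
      using that assms(1) by (simp add: cylinder_def w'_def)
    then show ?thesis
      using E0(3) by blast
  qed
  moreover have "finite (E \<union> h ` E0)"
    using \<open>finite E\<close> E0(1) by simp
  ultimately show "\<exists>E' w'. finite E' \<and> cylinder E' w' \<subseteq> cylinder E w \<and>
      cylinder E' w' \<inter> {g. g \<circ> h \<in> N} = {}"
    by blast
qed

section \<open>Meager sets in the Cantor space\<close>

lemma meager_in_subset: "A \<subseteq> B \<Longrightarrow> meager_in X B \<Longrightarrow> meager_in X A"
  unfolding meager_in_def by (meson order_trans)

lemma meager_in_cantor_vimage_comp:
  fixes h :: "'b \<Rightarrow> 'a" and S :: "('b \<Rightarrow> bool) set"
  assumes "inj h" "meager_in cantor_top S"
  shows "meager_in cantor_top {g. g \<circ> h \<in> S}"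
proof -
  obtain N :: "nat \<Rightarrow> ('b \<Rightarrow> bool) set"
    where N: "\<And>n. nowhere_dense_in cantor_top (N n)" "S \<subseteq> (\<Union>n. N n)"
    using assms(2) unfolding meager_in_def by blast
  have "nowhere_dense_in cantor_top {g. g \<circ> h \<in> N n}" for n
    using nowhere_dense_cantor_vimage_comp[OF assms(1) N(1)] .
  moreover have "{g. g \<circ> h \<in> S} \<subseteq> (\<Union>n. {g. g \<circ> h \<in> N n})"
    using N(2) by blast
  ultimately show ?thesis
    unfolding meager_in_def by (intro exI[of _ "\<lambda>n. {g. g \<circ> h \<in> N n}"]) blast
qed

text \<open>One half of Talagrand's characterisation of meager filters.\<close>

lemma meager_in_cantor_if_eventually_meets:
  fixes K :: "nat \<Rightarrow> 'a set" and S :: "'a set set"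
  assumes "\<And>k. finite (K k)" "\<And>x. finite {k. x \<in> K k}"
    and "\<And>A. A \<in> S \<Longrightarrow> \<exists>k0. \<forall>k\<ge>k0. K k \<inter> A \<noteq> {}"
  shows "meager_in cantor_top (char_fun ` S)"
proof -
  define C where "C k0 = {f. \<forall>k\<ge>k0. \<exists>x\<in>K k. f x}" for k0
  have "char_fun ` S \<subseteq> (\<Union>k0. C k0)"
    using assms(3) by (fastforce simp: C_def char_fun_def)
  moreover have "nowhere_dense_in cantor_top (C k0)" for k0
  proof (rule nowhere_dense_cantorI)
    fix E :: "'a set" and w
    assume "finite E"
    have "{k. K k \<inter> E \<noteq> {}} = (\<Union>x\<in>E. {k. x \<in> K k})"
      by blast
    then have "finite {k. K k \<inter> E \<noteq> {}}"
      using \<open>finite E\<close> assms(2) by (simp only: finite_UN_I)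
    then obtain B where B: "\<forall>k\<in>{k. K k \<inter> E \<noteq> {}}. k < B"
      unfolding finite_nat_set_iff_bounded by (elim exE)
    have KE: "K (k0 + B) \<inter> E = {}"
      using B[rule_format, of "k0 + B"] by auto
    define w' where "w' x = (x \<in> E \<and> w x)" for x
    have "cylinder (E \<union> K (k0 + B)) w' \<subseteq> cylinder E w"
      by (auto simp: cylinder_def w'_def)
    moreover have "cylinder (E \<union> K (k0 + B)) w' \<inter> C k0 = {}"
    proof -
      have "\<not> f x" if "f \<in> cylinder (E \<union> K (k0 + B)) w'" "x \<in> K (k0 + B)" for f x
        using that KE by (auto simp: cylinder_def w'_def)
      moreover have "\<exists>x\<in>K (k0 + B). f x" if "f \<in> C k0" for f
        using that le_add1[of k0 B] unfolding C_def by blast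
      ultimately show ?thesis
        by blast
    qed
    moreover have "finite (E \<union> K (k0 + B))"
      using \<open>finite E\<close> assms(1) by simp
    ultimately show "\<exists>E' w'. finite E' \<and> cylinder E' w' \<subseteq> cylinder E w \<and>
        cylinder E' w' \<inter> C k0 = {}"
      by blast
  qed
  ultimately show ?thesis
    unfolding meager_in_def by (intro exI[of _ C]) blast
qed

section \<open>The filter \<open>omega_power F\<close>\<close>

lemma is_filter_UNIV: "is_filter F \<Longrightarrow> UNIV \<in> F"
  and is_filter_empty: "is_filter F \<Longrightarrow> {} \<notin> F"
  and is_filter_superset: "is_filter F \<Longrightarrow> A \<in> F \<Longrightarrow> A \<subseteq> B \<Longrightarrow> B \<in> F"
  and is_filter_Int: "is_filter F \<Longrightarrow> A \<in> F \<Longrightarrow> B \<in> F \<Longrightarrow> A \<inter> B \<in> F"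
  unfolding Defs.is_filter_def by blast+

lemma is_filter_INT:
  assumes "is_filter F" "finite S" "\<And>i. i \<in> S \<Longrightarrow> R i \<in> F"
  shows "(\<Inter>i\<in>S. R i) \<in> F"
  using assms(2,3)
  by (induction S rule: finite_induct) (simp_all add: is_filter_UNIV is_filter_Int assms(1))

lemma Sigma_UNIV_Image_singleton [simp]: "Sigma UNIV A `` {n} = A n"
  by blast

lemma mem_omega_power_iff: "X \<in> omega_power F \<longleftrightarrow> (\<forall>n. X `` {n} \<in> F)"
proof
  assume "X \<in> omega_power F"
  then show "\<forall>n. X `` {n} \<in> F"
    unfolding omega_power_def by auto
next
  assume "\<forall>n. X `` {n} \<in> F"
  moreover have "X = Sigma UNIV (\<lambda>n. X `` {n})"
    by auto
  ultimately show "X \<in> omega_power F"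
    unfolding omega_power_def by blast
qed

lemma is_filter_omega_power:
  assumes "is_filter F"
  shows "is_filter (omega_power F)"
  unfolding Defs.is_filter_def
proof (intro conjI allI impI)
  show "UNIV \<in> omega_power F"
    using is_filter_UNIV[OF assms] by (simp add: mem_omega_power_iff Image_singleton)
  show "{} \<notin> omega_power F"
    using is_filter_empty[OF assms] by (simp add: mem_omega_power_iff)
next
  fix A B :: "(nat \<times> nat) set"
  assume "A \<in> omega_power F \<and> A \<subseteq> B"
  then show "B \<in> omega_power F"
    using is_filter_superset[OF assms] Image_mono[OF _ order_refl]
    unfolding mem_omega_power_iff by meson
next
  fix A B :: "(nat \<times> nat) set"
  assume "A \<in> omega_power F \<and> B \<in> omega_power F"
  moreover have "(A \<inter> B) `` {n} = A `` {n} \<inter> B `` {n}" for n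
    by blast
  ultimately show "A \<inter> B \<in> omega_power F"
    using is_filter_Int[OF assms] unfolding mem_omega_power_iff by simp
qed

lemma P_filterD:
  fixes G :: "nat \<Rightarrow> 'a set"
  assumes "P_filter F" "range G \<subseteq> F"
  shows "\<exists>H\<in>F. \<forall>n. finite (H - G n)"
  using assms unfolding P_filter_def by blast

lemma P_filter_omega_power:
  assumes "P_filter F"
  shows "P_filter (omega_power F)"
  unfolding P_filter_def
proof (intro conjI allI impI)
  have F: "is_filter F"
    using assms unfolding P_filter_def by blast
  then show "is_filter (omega_power F)"
    by (rule is_filter_omega_power)
  fix G :: "nat \<Rightarrow> (nat \<times> nat) set"
  assume "range G \<subseteq> omega_power F"
  then have row: "G k `` {n} \<in> F" for k n
    using range_subsetD[of G "omega_power F" k] by (simp add: mem_omega_power_iff)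
  have "\<forall>n. \<exists>B. B \<in> F \<and> (\<forall>k. finite (B - G k `` {n}))"
  proof
    fix n
    have "range (\<lambda>k. G k `` {n}) \<subseteq> F"
      using row by blast
    from P_filterD[OF assms this] show "\<exists>B. B \<in> F \<and> (\<forall>k. finite (B - G k `` {n}))"
      by blast
  qed
  then obtain B where "\<forall>n. B n \<in> F \<and> (\<forall>k. finite (B n - G k `` {n}))"
    by (rule choice[THEN exE])
  then have B: "\<And>n. B n \<in> F" "\<And>n k. finite (B n - G k `` {n})"
    by blast+
  \<comment> \<open>Row \<open>n\<close> of \<open>H\<close> lies in the first \<open>n + 1\<close> sets \<open>G k\<close>, so \<open>H - G k\<close> is confined to the rows
    \<open>n < k\<close>, where it is almost contained in \<open>B n\<close>.\<close>
  define H where "H = Sigma UNIV (\<lambda>n. B n \<inter> (\<Inter>k\<le>n. G k `` {n}))"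
  show "\<exists>H\<in>omega_power F. \<forall>k. finite (H - G k)"
  proof (intro bexI allI)
    show "H \<in> omega_power F"
      unfolding mem_omega_power_iff H_def
      using F B(1) row by (auto intro!: is_filter_Int is_filter_INT)
    fix k
    have "H - G k \<subseteq> (\<Union>n<k. {n} \<times> (B n - G k `` {n}))"
      by (auto simp: H_def not_less)
    moreover have "finite (\<Union>n<k. {n} \<times> (B n - G k `` {n}))"
      using B(2) by blast
    ultimately show "finite (H - G k)"
      by (rule finite_subset)
  qed
qed

lemma P_filter_of_P_filter_omega_power:
  assumes "is_filter F" "P_filter (omega_power F)"
  shows "P_filter F"
  unfolding P_filter_def
proof (intro conjI allI impI)
  show "is_filter F"
    by fact
  fix G :: "nat \<Rightarrow> nat set"
  assume "range G \<subseteq> F"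
  then have "range (\<lambda>k. UNIV \<times> G k) \<subseteq> omega_power F"
    using range_subsetD[of G F] by (auto simp: mem_omega_power_iff)
  from P_filterD[OF assms(2) this]
  obtain H where H: "H \<in> omega_power F" "\<And>k. finite (H - UNIV \<times> G k)"
    by blast
  show "\<exists>H\<in>F. \<forall>k. finite (H - G k)"
  proof (intro bexI allI)
    show "H `` {0} \<in> F"
      using H(1) unfolding mem_omega_power_iff by blast
    fix k
    have "H `` {0} - G k \<subseteq> snd ` (H - UNIV \<times> G k)"
      by force
    then show "finite (H `` {0} - G k)"
      using H(2) finite_subset by blast
  qed
qed

lemma meager_omega_power:
  assumes "meager_in cantor_top (char_fun ` F)"
  shows "meager_in cantor_top (char_fun ` omega_power F)"
proof -
  have "char_fun X \<circ> Pair 0 = char_fun (X `` {0})" for X :: "(nat \<times> nat) set"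
    by (auto simp: char_fun_def)
  then have "char_fun ` omega_power F \<subseteq> {g. g \<circ> Pair 0 \<in> char_fun ` F}"
    by (auto simp: mem_omega_power_iff)
  moreover have "meager_in cantor_top {g. g \<circ> Pair (0::nat) \<in> char_fun ` F}"
    by (rule meager_in_cantor_vimage_comp[OF _ assms]) (simp add: inj_on_def)
  ultimately show ?thesis
    by (rule meager_in_subset)
qed

text \<open>The witness is \<open>A\<close> placed on and above the diagonal, which lies in \<open>omega_power F\<close>
  because \<open>F\<close> is free; it misses the blocks \<open>I k\<close>, \<open>k \<in> S\<close>, so the patterns \<open>u k\<close> can be added
  on them.\<close>

lemma omega_power_meets_cylinders:
  assumes "free_filter F" "A \<in> F" "disjoint_family I"
    and "\<And>k n m. k \<in> S \<Longrightarrow> (n, m) \<in> I k \<Longrightarrow> n \<le> m \<Longrightarrow> m \<notin> A"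
  obtains X where "X \<in> omega_power F" "\<forall>k\<in>S. char_fun X \<in> cylinder (I k) (u k)"
proof -
  have F: "is_filter F"
    using assms(1) unfolding free_filter_def by blast
  define X0 where "X0 = Sigma UNIV (\<lambda>n. A \<inter> {n..})"
  have "{n..} \<in> F" for n :: nat
    using assms(1) unfolding free_filter_def by (simp add: Compl_eq_Diff_UNIV[symmetric])
  then have "X0 \<in> omega_power F"
    unfolding mem_omega_power_iff X0_def using is_filter_Int[OF F assms(2)] by auto
  define X where "X = X0 \<union> {x. \<exists>k\<in>S. x \<in> I k \<and> u k x}"
  have "X \<in> omega_power F"
    using is_filter_superset[OF is_filter_omega_power[OF F] \<open>X0 \<in> omega_power F\<close>]
    unfolding X_def by blast
  moreover have "char_fun X \<in> cylinder (I k) (u k)" if "k \<in> S" for k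
  proof -
    have "I k \<inter> X0 = {}"
      using assms(4)[OF that] by (auto simp: X0_def)
    moreover have "x \<in> I k \<Longrightarrow> x \<in> I k' \<Longrightarrow> k' = k" for x k'
      using assms(3) unfolding disjoint_family_on_def by blast
    ultimately show ?thesis
      using that by (auto simp: cylinder_def char_fun_def X_def)
  qed
  ultimately show thesis
    by (intro that) auto
qed

lemma finite_disjoint_family_mem:
  assumes "disjoint_family I"
  shows "finite {k. x \<in> I k}"
proof (cases "\<exists>k. x \<in> I k")
  case True
  then obtain k where "x \<in> I k"
    by blast
  with assms have "{k. x \<in> I k} \<subseteq> {k}"
    unfolding disjoint_family_on_def by blast
  then show ?thesis
    by (rule finite_subset) simp
qed simp

lemma meager_of_meager_omega_power:
  assumes "free_filter F" "meager_in cantor_top (char_fun ` omega_power F)"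
  shows "meager_in cantor_top (char_fun ` F)"
proof -
  obtain N :: "nat \<Rightarrow> (nat \<times> nat \<Rightarrow> bool) set"
    where N: "\<And>n. nowhere_dense_in cantor_top (N n)" "char_fun ` omega_power F \<subseteq> (\<Union>n. N n)"
    using assms(2) unfolding meager_in_def by blast
  have nd: "\<And>k. nowhere_dense_in cantor_top (\<Union>j\<le>k. N j)"
    using nowhere_dense_cantor_UN[OF finite_atMost N(1)] .
  obtain I u where "disjoint_family I"
    "\<forall>k. finite (I k) \<and> cylinder (I k) (u k) \<inter> (\<Union>j\<le>k. N j) = {}"
    by (rule nowhere_dense_cantor_disjoint_cylinders[of "\<lambda>k. \<Union>j\<le>k. N j", OF nd])
  then have I: "\<And>k. finite (I k)" "disjoint_family I"
    "\<And>k. cylinder (I k) (u k) \<inter> (\<Union>j\<le>k. N j) = {}"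
    by simp_all
  define K where "K k = {m. \<exists>n\<le>m. (n, m) \<in> I k}" for k
  show ?thesis
  proof (rule meager_in_cantor_if_eventually_meets)
    show "finite (K k)" for k
    proof (rule finite_subset)
      show "K k \<subseteq> snd ` I k"
        unfolding K_def by force
    qed (simp add: I(1))
    show "finite {k. m \<in> K k}" for m
    proof (rule finite_subset)
      show "{k. m \<in> K k} \<subseteq> (\<Union>n\<le>m. {k. (n, m) \<in> I k})"
        unfolding K_def by blast
    qed (simp add: finite_disjoint_family_mem[OF I(2)])
  next
    fix A
    assume "A \<in> F"
    show "\<exists>k0. \<forall>k\<ge>k0. K k \<inter> A \<noteq> {}"
    proof (rule ccontr)
      assume "\<nexists>k0. \<forall>k\<ge>k0. K k \<inter> A \<noteq> {}"
      then have misses: "\<exists>k\<ge>j. K k \<inter> A = {}" for j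
        by blast
      have "m \<notin> A" if "k \<in> {k. K k \<inter> A = {}}" "(n, m) \<in> I k" "n \<le> m" for k n m
        using that by (auto simp: K_def)
      then obtain X where X: "X \<in> omega_power F"
        "\<forall>k\<in>{k. K k \<inter> A = {}}. char_fun X \<in> cylinder (I k) (u k)"
        by (rule omega_power_meets_cylinders[OF assms(1) \<open>A \<in> F\<close> I(2)])
      then obtain j where "char_fun X \<in> N j"
        using N(2) by blast
      moreover obtain k where "k \<ge> j" "K k \<inter> A = {}"
        using misses by blast
      moreover have "char_fun X \<notin> (\<Union>j\<le>k. N j)"
        using X(2) I(3)[of k] \<open>K k \<inter> A = {}\<close> by blast
      ultimately show False
        by blast
    qed
  qed
qed

theorem mainTheorem5:
  fixes F :: "nat set set"
  assumes "free_filter F"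
  shows "(non_meager F \<longleftrightarrow> non_meager (omega_power F)) \<and>
         (P_filter F \<longleftrightarrow> P_filter (omega_power F))"
proof -
  have "is_filter F"
    using assms unfolding free_filter_def by blast
  then show ?thesis
    unfolding non_meager_def
    using meager_omega_power meager_of_meager_omega_power[OF assms]
      P_filter_omega_power P_filter_of_P_filter_omega_power by blast
qed

end
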